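(* GTDS is co-recursively-enumerable, i.e., the set of GTDS instances that have no solution is recursively enumerable.
   Context: An instance of GTDS consists of a rational discount factor $0<\lambda<1$, a rational target $t$, and rational weights $a_1,\dots,a_k$ ($k\in\mathbb N$); a solution is an infinite sequence $w\in\{a_1,\dots,a_k\}^\omega$ with $\sum_{i=0}^\infty w(i)\lambda^i=t$. *)

theory Defs
  imports Complex_Main "HOL-Library.Nat_Bijection"
begin

datatype recf =
    Zero
  | Succ
  | Proj nat
  | Comp recf "recf list"
  | PrimRec recf recf
  | Minim recf

inductive eval :: "recf \<Rightarrow> nat list \<Rightarrow> nat \<Rightarrow> bool" where
  zero: "eval Zero xs 0"
| succ: "eval Succ (x # xs) (Suc x)"
| proj: "i < length xs \<Longrightarrow> eval (Proj i) xs (xs ! i)"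
| comp: "length ys = length gs \<Longrightarrow> (\<forall>i < length gs. eval (gs ! i) xs (ys ! i))
          \<Longrightarrow> eval f ys z \<Longrightarrow> eval (Comp f gs) xs z"
| pr0: "eval f xs y \<Longrightarrow> eval (PrimRec f g) (0 # xs) y"
| prS: "eval (PrimRec f g) (n # xs) y \<Longrightarrow> eval g (y # n # xs) z
          \<Longrightarrow> eval (PrimRec f g) (Suc n # xs) z"
| mn: "eval f (n # xs) 0 \<Longrightarrow> (\<forall>m < n. \<exists>y. eval f (m # xs) (Suc y))
          \<Longrightarrow> eval (Minim f) xs n"

definition rec_enum :: "nat set \<Rightarrow> bool" where
  "rec_enum A \<longleftrightarrow> (\<exists>f. \<forall>n. n \<in> A \<longleftrightarrow> (\<exists>y. eval f [n] y))"

definition encode_rat :: "rat \<Rightarrow> nat" where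
  "encode_rat q = prod_encode (int_encode (fst (quotient_of q)), nat (snd (quotient_of q)))"

definition encode_instance :: "rat \<Rightarrow> rat \<Rightarrow> rat list \<Rightarrow> nat" where
  "encode_instance lam t ws =
     prod_encode (encode_rat lam, prod_encode (encode_rat t, list_encode (map encode_rat ws)))"

definition gtds_instance :: "rat \<Rightarrow> bool" where
  "gtds_instance lam \<longleftrightarrow> 0 < lam \<and> lam < 1"

definition gtds_solution :: "rat \<Rightarrow> rat \<Rightarrow> rat list \<Rightarrow> (nat \<Rightarrow> rat) \<Rightarrow> bool" where
  "gtds_solution lam t ws w \<longleftrightarrow>
     (\<forall>i. w i \<in> set ws) \<and>
     (\<lambda>i. real_of_rat (w i) * real_of_rat lam ^ i) sums real_of_rat t"

definition gtds_solvable :: "rat \<Rightarrow> rat \<Rightarrow> rat list \<Rightarrow> bool" where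
  "gtds_solvable lam t ws \<longleftrightarrow> (\<exists>w. gtds_solution lam t ws w)"

end

theory Submission

  imports Defs "HOL-Library.More_List"

begin

text \<open>An instance has no solution iff for some length N every word of N weights has partial
  sum farther than lam^N B from t, where B bounds all expansions: one direction estimates the
  tail of a solution, the other is Koenig's lemma over the finitely many weights. Taking B of the
  form K / ((1 - lam) D) with D a common denominator, this condition on (N, D, K) becomes an
  inequality between natural numbers computed from the code of the instance by bounded sums,
  products and searches. So the codes of unsolvable instances are the projection of the zero set
  of a primitive recursive function, which is the domain of its unbounded minimisation.\<close>

section \<open>Expansions over a finite set of digits\<close>

text \<open>Every expansion with digits in A has absolute value at most B, since the geometric series
  of B (1 - lam) lam^i sums to B.\<close>
locale bounded_digits =
  fixes lam :: real and val :: "'a \<Rightarrow> real" and A :: "'a set" and B :: real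
  assumes finite_digits: "finite A"
    and lam_pos: "0 < lam" and lam_less_1: "lam < 1"
    and digit_bound: "\<And>a. a \<in> A \<Longrightarrow> \<bar>val a\<bar> \<le> B * (1 - lam)"

begin

definition partial_sum :: "(nat \<Rightarrow> 'a) \<Rightarrow> nat \<Rightarrow> real" where
  "partial_sum u N = (\<Sum>i<N. val (u i) * lam ^ i)"

definition approximates :: "real \<Rightarrow> nat \<Rightarrow> (nat \<Rightarrow> 'a) \<Rightarrow> bool" where
  "approximates t N u \<longleftrightarrow> (\<forall>i<N. u i \<in> A) \<and> \<bar>t - partial_sum u N\<bar> \<le> lam ^ N * B"

lemma approximates_cong:
  "(\<And>i. i < N \<Longrightarrow> u i = v i) \<Longrightarrow> approximates t N u \<longleftrightarrow> approximates t N v"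
  by (simp add: approximates_def partial_sum_def)

lemma approximates_Suc: "approximates t (Suc N) u \<Longrightarrow> approximates t N u"
proof -
  assume approx: "approximates t (Suc N) u"
  then have "u N \<in> A" by (simp add: approximates_def)
  then have "\<bar>val (u N) * lam ^ N\<bar> \<le> B * (1 - lam) * lam ^ N"
    using digit_bound lam_pos by (simp add: abs_mult mult_right_mono)
  moreover have "partial_sum u (Suc N) = partial_sum u N + val (u N) * lam ^ N"
    by (simp add: partial_sum_def)
  ultimately have "\<bar>t - partial_sum u N\<bar> \<le> lam ^ Suc N * B + B * (1 - lam) * lam ^ N"
    using approx unfolding approximates_def by linarith
  also have "\<dots> = lam ^ N * B" by (simp add: algebra_simps)
  finally show ?thesis using approx by (simp add: approximates_def)
qed

lemma approximates_le: "approximates t N u \<Longrightarrow> M \<le> N \<Longrightarrow> approximates t M u"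
  by (induction N) (auto intro: approximates_Suc simp: le_Suc_eq)

lemma expansion_approximates:
  assumes digits: "\<And>i. w i \<in> A" and sums: "(\<lambda>i. val (w i) * lam ^ i) sums t"
  shows "approximates t N w"
proof -
  have tail: "(\<lambda>i. val (w (i + N)) * lam ^ (i + N)) sums (t - partial_sum w N)"
    using sums_split_initial_segment[OF sums, of N] by (simp add: partial_sum_def)
  have bound: "(\<lambda>i. B * (1 - lam) * lam ^ N * lam ^ i) sums (lam ^ N * B)"
    using sums_mult[OF geometric_sums[of lam], of "B * (1 - lam) * lam ^ N"] lam_pos lam_less_1
    by (simp add: mult.commute)
  have "\<bar>val (w (i + N)) * lam ^ (i + N)\<bar> \<le> B * (1 - lam) * lam ^ N * lam ^ i" for i
    using digit_bound[OF digits] lam_pos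
    by (simp add: abs_mult power_add mult_right_mono mult.assoc mult.left_commute)
  then have "\<bar>t - partial_sum w N\<bar> \<le> lam ^ N * B"
    using sums_le[OF _ tail bound] sums_le[OF _ sums_minus[OF tail] bound] abs_le_iff by fastforce
  then show ?thesis using digits by (simp add: approximates_def)
qed

definition extendable :: "real \<Rightarrow> (nat \<Rightarrow> 'a) \<Rightarrow> nat \<Rightarrow> bool" where
  "extendable t v M \<longleftrightarrow> (\<forall>N\<ge>M. \<exists>u. approximates t N u \<and> (\<forall>i<M. u i = v i))"

text \<open>Pigeonhole over the finitely many digits: if every choice of the next digit had a length
  beyond which it cannot be extended, then beyond the largest of these lengths nothing could be.\<close>
lemma extendable_Suc:
  assumes ext: "extendable t v M"
  shows "\<exists>a. extendable t (v(M := a)) (Suc M)"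
proof (rule ccontr)
  assume "\<nexists>a. extendable t (v(M := a)) (Suc M)"
  then obtain L where L: "\<And>a. L a \<ge> Suc M \<and>
      (\<forall>u. approximates t (L a) u \<longrightarrow> \<not> (\<forall>i<Suc M. u i = (v(M := a)) i))"
    unfolding extendable_def by metis
  define N where "N = Max (insert (Suc M) (L ` A))"
  have "Suc M \<le> N" and L_le: "\<And>a. a \<in> A \<Longrightarrow> L a \<le> N"
    using finite_digits by (simp_all add: N_def)
  then obtain u where u: "approximates t N u" "\<forall>i<M. u i = v i"
    using ext unfolding extendable_def by (meson Suc_leD)
  have "u M \<in> A" using u(1) \<open>Suc M \<le> N\<close> by (simp add: approximates_def)
  then have "approximates t (L (u M)) u" using approximates_le[OF u(1) L_le] by blast
  moreover have "\<forall>i<Suc M. u i = (v(M := u M)) i" using u(2) by (simp add: less_Suc_eq)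
  ultimately show False using L by blast
qed

lemma koenig:
  assumes "\<And>N. \<exists>u. approximates t N u"
  shows "\<exists>w. \<forall>N. approximates t N w"
proof -
  have "\<exists>v. extendable t v 0" using assms by (simp add: extendable_def)
  moreover have "\<exists>v'. extendable t v' (Suc M) \<and> (\<forall>i<M. v' i = v i)" if "extendable t v M" for v M
    using extendable_Suc[OF that] by fastforce
  ultimately obtain f where f: "\<And>M. extendable t (f M) M" "\<And>M i. i < M \<Longrightarrow> f (Suc M) i = f M i"
    using dependent_nat_choice[of "\<lambda>M v. extendable t v M" "\<lambda>M v v'. \<forall>i<M. v' i = v i"] by blast
  define w where "w i = f (Suc i) i" for i
  have f_w: "i < M \<Longrightarrow> f M i = w i" for i M
    by (induction M) (auto simp: w_def less_Suc_eq f(2))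
  have "approximates t N w" for N
  proof -
    obtain u where "approximates t N u" "\<forall>i<N. u i = f N i"
      using f(1)[of N] by (auto simp: extendable_def)
    then show ?thesis using approximates_cong[of N u w t] f_w by auto
  qed
  then show ?thesis by blast
qed

theorem expansion_iff_approximable:
  "(\<exists>w. (\<forall>i. w i \<in> A) \<and> (\<lambda>i. val (w i) * lam ^ i) sums t) \<longleftrightarrow> (\<forall>N. \<exists>u. approximates t N u)"
proof
  assume "\<forall>N. \<exists>u. approximates t N u"
  then obtain w where w: "\<And>N. approximates t N w" using koenig by blast
  have "w i \<in> A" for i using w[of "Suc i"] by (simp add: approximates_def)
  moreover have "(\<lambda>N. partial_sum w N) \<longlonglongrightarrow> t"
  proof (rule tendsto_sandwich)
    have bounds: "t - lam ^ N * B \<le> partial_sum w N \<and> partial_sum w N \<le> t + lam ^ N * B" for N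
      using w[of N] by (auto simp: approximates_def)
    have "(\<lambda>N. lam ^ N * B) \<longlonglongrightarrow> 0"
      using LIMSEQ_power_zero[of lam] lam_pos lam_less_1 by (auto intro: tendsto_mult_left_zero)
    then show "(\<lambda>N. t - lam ^ N * B) \<longlonglongrightarrow> t" "(\<lambda>N. t + lam ^ N * B) \<longlonglongrightarrow> t"
      using tendsto_diff[of "\<lambda>_. t"] tendsto_add[of "\<lambda>_. t"] by force+
    show "\<forall>\<^sub>F N in sequentially. t - lam ^ N * B \<le> partial_sum w N"
      "\<forall>\<^sub>F N in sequentially. partial_sum w N \<le> t + lam ^ N * B"
      using bounds by (auto intro!: always_eventually)
  qed
  ultimately show "\<exists>w. (\<forall>i. w i \<in> A) \<and> (\<lambda>i. val (w i) * lam ^ i) sums t"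
    unfolding sums_def partial_sum_def by blast
qed (use expansion_approximates in blast)

end

section \<open>Certificates of unsolvability\<close>

text \<open>D is a common denominator of t and the weights, and B = K / ((1 - lam) D) bounds every
  expansion; no word of length N comes within lam^N B of t.\<close>
definition gtds_certificate :: "rat \<Rightarrow> rat \<Rightarrow> rat list \<Rightarrow> nat \<Rightarrow> nat \<Rightarrow> nat \<Rightarrow> bool" where
  "gtds_certificate lam t ws N D K \<longleftrightarrow>
     0 < D \<and> nat (snd (quotient_of t)) dvd D \<and>
     (\<forall>a\<in>set ws. nat (snd (quotient_of a)) dvd D \<and> \<bar>real_of_rat a\<bar> * D \<le> K) \<and>
     (\<forall>u. (\<forall>i<N. u i \<in> set ws) \<longrightarrow>
        real_of_rat lam ^ N * K
          < \<bar>real_of_rat t - (\<Sum>i<N. real_of_rat (u i) * real_of_rat lam ^ i)\<bar> * (1 - real_of_rat lam) * D)"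

lemma not_solvable_iff_far_words:
  fixes D K :: nat
  assumes lam: "gtds_instance lam" and D: "0 < D" and K: "\<forall>a\<in>set ws. \<bar>real_of_rat a\<bar> * D \<le> K"
  shows "\<not> gtds_solvable lam t ws \<longleftrightarrow> (\<exists>N. \<forall>u. (\<forall>i<N. u i \<in> set ws) \<longrightarrow>
    real_of_rat lam ^ N * K
      < \<bar>real_of_rat t - (\<Sum>i<N. real_of_rat (u i) * real_of_rat lam ^ i)\<bar> * (1 - real_of_rat lam) * D)"
proof -
  let ?l = "real_of_rat lam"
  have scale: "0 < (1 - ?l) * D" using lam D by (simp add: gtds_instance_def)
  interpret bounded_digits ?l real_of_rat "set ws" "K / ((1 - ?l) * D)"
  proof
    show "0 < ?l" "?l < 1" using lam by (simp_all add: gtds_instance_def)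
    have "K / ((1 - ?l) * D) * (1 - ?l) = K / D" using lam by (simp add: gtds_instance_def)
    then show "\<bar>real_of_rat a\<bar> \<le> K / ((1 - ?l) * D) * (1 - ?l)" if "a \<in> set ws" for a
      using K that D by (simp add: pos_le_divide_eq)
  qed simp
  have far: "\<not> approximates (real_of_rat t) N u \<longleftrightarrow> ((\<forall>i<N. u i \<in> set ws) \<longrightarrow>
      ?l ^ N * K < \<bar>real_of_rat t - (\<Sum>i<N. real_of_rat (u i) * ?l ^ i)\<bar> * (1 - ?l) * D)" for N u
    using pos_le_divide_eq[OF scale] by (auto simp: approximates_def partial_sum_def mult.assoc not_le)
  have "gtds_solvable lam t ws \<longleftrightarrow> (\<forall>N. \<exists>u. approximates (real_of_rat t) N u)"
    using expansion_iff_approximable by (simp add: gtds_solvable_def gtds_solution_def)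
  then show ?thesis by (simp add: far)
qed

lemma not_solvable_iff_certificate:
  assumes lam: "gtds_instance lam"
  shows "\<not> gtds_solvable lam t ws \<longleftrightarrow> (\<exists>N D K. gtds_certificate lam t ws N D K)"
proof
  assume unsolvable: "\<not> gtds_solvable lam t ws"
  define D where "D = (\<Prod>r\<in>set (t # ws). nat (snd (quotient_of r)))"
  define K where "K = nat \<lceil>(\<Sum>a\<in>set ws. \<bar>real_of_rat a\<bar>) * D\<rceil>"
  have D_pos: "0 < D" using quotient_of_denom_pos' by (simp add: D_def prod_pos)
  have den_dvd: "nat (snd (quotient_of r)) dvd D" if "r \<in> set (t # ws)" for r
    unfolding D_def by (rule dvd_prodI[OF finite_set that])
  have K_bound: "\<bar>real_of_rat a\<bar> * D \<le> K" if "a \<in> set ws" for a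
  proof -
    have "\<bar>real_of_rat a\<bar> \<le> (\<Sum>a\<in>set ws. \<bar>real_of_rat a\<bar>)"
      using that by (intro member_le_sum) simp_all
    then have "\<bar>real_of_rat a\<bar> * D \<le> (\<Sum>a\<in>set ws. \<bar>real_of_rat a\<bar>) * D"
      by (simp add: mult_right_mono)
    also have "\<dots> \<le> K" unfolding K_def by linarith
    finally show ?thesis .
  qed
  obtain N where "\<forall>u. (\<forall>i<N. u i \<in> set ws) \<longrightarrow> real_of_rat lam ^ N * K
      < \<bar>real_of_rat t - (\<Sum>i<N. real_of_rat (u i) * real_of_rat lam ^ i)\<bar> * (1 - real_of_rat lam) * D"
    using not_solvable_iff_far_words[OF lam D_pos] K_bound unsolvable by blast
  then have "gtds_certificate lam t ws N D K"
    using D_pos den_dvd K_bound by (simp add: gtds_certificate_def)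
  then show "\<exists>N D K. gtds_certificate lam t ws N D K" by blast
next
  assume "\<exists>N D K. gtds_certificate lam t ws N D K"
  then obtain N D K where "gtds_certificate lam t ws N D K" by blast
  then show "\<not> gtds_solvable lam t ws"
    using not_solvable_iff_far_words[OF lam, of D ws K t] by (auto simp: gtds_certificate_def)
qed

section \<open>Primitive recursive expressions\<close>

inductive_cases eval_ZeroE: "eval Zero xs y"

inductive_cases eval_SuccE: "eval Succ xs y"

inductive_cases eval_ProjE: "eval (Proj i) xs y"

inductive_cases eval_CompE: "eval (Comp f gs) xs y"

inductive_cases eval_PrimRecE: "eval (PrimRec f g) xs y"

inductive_cases eval_MinimE: "eval (Minim f) xs y"

lemma eval_unique: "eval f xs y \<Longrightarrow> eval f xs y' \<Longrightarrow> y = y'"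
proof (induction arbitrary: y' rule: eval.induct)
  case (zero xs)
  then show ?case by (auto elim: eval_ZeroE)
next
  case (succ x xs)
  then show ?case by (auto elim: eval_SuccE)
next
  case (proj i xs)
  then show ?case by (auto elim: eval_ProjE)
next
  case (comp ys gs xs f z)
  from comp.prems obtain ys' where ys': "length ys' = length gs"
    "\<forall>i<length gs. eval (gs ! i) xs (ys' ! i)" "eval f ys' y'"
    by (auto elim: eval_CompE)
  have "ys = ys'" using comp ys'(1,2) by (fastforce intro!: nth_equalityI)
  then show ?case using comp.IH ys'(3) by auto
next
  case (pr0 f xs y g)
  from pr0.prems have "eval f xs y'" by (auto elim: eval_PrimRecE)
  then show ?case using pr0.IH by auto
next
  case (prS f g n xs y z)
  from prS.prems obtain y1 where "eval (PrimRec f g) (n # xs) y1" "eval g (y1 # n # xs) y'"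
    by (auto elim: eval_PrimRecE)
  then show ?case using prS.IH by auto
next
  case (mn f n xs)
  from mn.prems have y': "eval f (y' # xs) 0" "\<forall>m<y'. \<exists>y. eval f (m # xs) (Suc y)"
    by (auto elim: eval_MinimE)
  show ?case
  proof (rule ccontr)
    assume "n \<noteq> y'"
    then consider "n < y'" | "y' < n" by linarith
    then show False
    proof cases
      case 1
      then obtain z where "eval f (n # xs) (Suc z)" using y'(2) by auto
      then show False using mn.IH(1) by fastforce
    next
      case 2
      then obtain z where "eval f (y' # xs) (Suc z)" "\<forall>u. eval f (y' # xs) u \<longrightarrow> Suc z = u"
        using mn.IH(2) by blast
      then show False using y'(1) by blast
    qed
  qed
qed

lemma eval_Comp_list_all2:
  "list_all2 (\<lambda>g y. eval g xs y) gs ys \<Longrightarrow> eval f ys z \<Longrightarrow> eval (Comp f gs) xs z"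
  by (auto simp: list_all2_conv_all_nth intro: eval.comp)

lemma list_all2_eval_Proj: "list_all2 (\<lambda>g y. eval g xs y) (map Proj [0..<length xs]) xs"
  by (auto simp: list_all2_conv_all_nth intro: eval.proj)

lemma eval_PrimRec_seq:
  assumes "eval f xs (r 0)" and "\<And>j. eval g (r j # j # xs) (r (Suc j))"
  shows "eval (PrimRec f g) (n # xs) (r n)"
  by (induction n) (auto intro: eval.pr0 eval.prS assms)

datatype pexp = PVar nat | PZero | PSuc pexp | PRec pexp pexp pexp

primrec peval :: "pexp \<Rightarrow> nat list \<Rightarrow> nat" where
  "peval (PVar i) env = env ! i"
| "peval PZero env = 0"
| "peval (PSuc e) env = Suc (peval e env)"
| "peval (PRec n b s) env = rec_nat (peval b env) (\<lambda>j r. peval s (r # j # env)) (peval n env)"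

primrec wf_pexp :: "nat \<Rightarrow> pexp \<Rightarrow> bool" where
  "wf_pexp k (PVar i) \<longleftrightarrow> i < k"
| "wf_pexp k PZero \<longleftrightarrow> True"
| "wf_pexp k (PSuc e) \<longleftrightarrow> wf_pexp k e"
| "wf_pexp k (PRec n b s) \<longleftrightarrow> wf_pexp k n \<and> wf_pexp k b \<and> wf_pexp (Suc (Suc k)) s"

primrec compile :: "nat \<Rightarrow> pexp \<Rightarrow> recf" where
  "compile k (PVar i) = Proj i"
| "compile k PZero = Zero"
| "compile k (PSuc e) = Comp Succ [compile k e]"
| "compile k (PRec n b s) =
     Comp (PrimRec (compile k b) (compile (Suc (Suc k)) s)) (compile k n # map Proj [0..<k])"

lemma eval_compile:
  "wf_pexp (length env) e \<Longrightarrow> eval (compile (length env) e) env (peval e env)"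
proof (induction e arbitrary: env)
  case (PVar i)
  then show ?case by (auto intro: eval.proj)
next
  case PZero
  then show ?case by (auto intro: eval.zero)
next
  case (PSuc e)
  then show ?case by (auto intro: eval_Comp_list_all2 eval.succ)
next
  case (PRec n b s)
  have "eval (PrimRec (compile (length env) b) (compile (Suc (Suc (length env))) s))
      (peval n env # env) (rec_nat (peval b env) (\<lambda>j r. peval s (r # j # env)) (peval n env))"
    using PRec by (intro eval_PrimRec_seq) (use PRec.IH(3)[of "_ # _ # env"] in auto)
  then show ?case
    using PRec list_all2_eval_Proj[of env] by (auto intro: eval_Comp_list_all2)
qed

text \<open>The partial recursive function searching for the least witness m is defined
  exactly on the projection.\<close>
lemma rec_enum_zero_projection:
  assumes wf: "wf_pexp 2 e" and A: "\<And>n. n \<in> A \<longleftrightarrow> (\<exists>m. peval e [m, n] = 0)"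
  shows "rec_enum A"
proof -
  let ?f = "compile 2 e"
  have eval_f: "eval ?f [m, n] v \<longleftrightarrow> v = peval e [m, n]" for m n v
    using eval_compile[of "[m, n]" e] wf eval_unique by (auto simp: numeral_2_eq_2)
  have "n \<in> A \<longleftrightarrow> (\<exists>y. eval (Minim ?f) [n] y)" for n
  proof
    assume "n \<in> A"
    then have "\<exists>m. peval e [m, n] = 0" using A by blast
    then have "peval e [LEAST m. peval e [m, n] = 0, n] = 0"
      and "\<forall>m < (LEAST m. peval e [m, n] = 0). \<exists>y. peval e [m, n] = Suc y"
      by (auto intro: LeastI_ex dest: not_less_Least simp: not0_implies_Suc)
    then show "\<exists>y. eval (Minim ?f) [n] y" by (intro exI eval.mn) (auto simp: eval_f)
  next
    assume "\<exists>y. eval (Minim ?f) [n] y"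
    then obtain y where "eval (Minim ?f) [n] y" by blast
    then have "eval ?f [y, n] 0" by (rule eval_MinimE)
    then show "n \<in> A" using A by (auto simp: eval_f)
  qed
  then show ?thesis unfolding rec_enum_def by blast
qed

primrec shift :: "nat \<Rightarrow> pexp \<Rightarrow> pexp" where
  "shift c (PVar i) = PVar (if i < c then i else Suc i)"
| "shift c PZero = PZero"
| "shift c (PSuc e) = PSuc (shift c e)"
| "shift c (PRec n b s) = PRec (shift c n) (shift c b) (shift (Suc (Suc c)) s)"

lemma peval_shift:
  "c \<le> length env \<Longrightarrow> peval (shift c e) (take c env @ y # drop c env) = peval e env"
proof (induction e arbitrary: c env)
  case (PVar i)
  then show ?case by (auto simp: nth_append nth_drop Suc_diff_le)
next
  case (PRec n b s)
  have "peval (shift (Suc (Suc c)) s)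
      (take (Suc (Suc c)) (r # j # env) @ y # drop (Suc (Suc c)) (r # j # env)) = peval s (r # j # env)"
    for r j
    using PRec.IH(3)[of "Suc (Suc c)" "r # j # env"] PRec.prems by simp
  then show ?case using PRec by simp
qed simp_all

lemma wf_pexp_shift: "c \<le> k \<Longrightarrow> wf_pexp (Suc k) (shift c e) \<longleftrightarrow> wf_pexp k e"
  by (induction e arbitrary: c k) auto

definition lift :: "pexp \<Rightarrow> pexp" where
  "lift e = shift 0 e"

lemma peval_lift [simp]: "peval (lift e) (y # env) = peval e env"
  using peval_shift[of 0 env e y] by (simp add: lift_def)

lemma wf_pexp_lift [simp]: "wf_pexp (Suc k) (lift e) \<longleftrightarrow> wf_pexp k e"
  by (simp add: lift_def wf_pexp_shift)

definition pconst :: "nat \<Rightarrow> pexp" where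
  "pconst n = (PSuc ^^ n) PZero"

lemma peval_pconst [simp]: "peval (pconst n) env = n"
  by (induction n) (simp_all add: pconst_def)

lemma wf_pexp_pconst [simp]: "wf_pexp k (pconst n)"
  by (induction n) (simp_all add: pconst_def)


definition piter :: "pexp \<Rightarrow> pexp \<Rightarrow> pexp \<Rightarrow> pexp" where
  "piter n b s = PRec n b (shift 1 s)"

lemma rec_nat_funpow: "rec_nat x (\<lambda>_ r. f r) n = (f ^^ n) x"
  by (induction n) simp_all

lemma peval_piter [simp]:
  "peval (piter n b s) env = ((\<lambda>r. peval s (r # env)) ^^ peval n env) (peval b env)"
proof -
  have "peval (shift 1 s) (r # j # env) = peval s (r # env)" for r j
    using peval_shift[of 1 "r # env" s j] by simp
  then show ?thesis by (simp add: piter_def rec_nat_funpow)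
qed

lemma wf_pexp_piter [simp]:
  "wf_pexp k (piter n b s) \<longleftrightarrow> wf_pexp k n \<and> wf_pexp k b \<and> wf_pexp (Suc k) s"
  by (simp add: piter_def wf_pexp_shift)

definition padd :: "pexp \<Rightarrow> pexp \<Rightarrow> pexp" where
  "padd a b = piter b a (PSuc (PVar 0))"

definition pmul :: "pexp \<Rightarrow> pexp \<Rightarrow> pexp" where
  "pmul a b = piter b PZero (padd (PVar 0) (lift a))"

definition ppred :: "pexp \<Rightarrow> pexp" where
  "ppred a = PRec a PZero (PVar 1)"

definition pdiff :: "pexp \<Rightarrow> pexp \<Rightarrow> pexp" where
  "pdiff a b = piter b a (ppred (PVar 0))"

lemma peval_padd [simp]: "peval (padd a b) env = peval a env + peval b env"
proof -
  have "(Suc ^^ n) x = x + n" for x n :: nat by (induction n) simp_all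
  then show ?thesis by (simp add: padd_def)
qed

lemma peval_pmul [simp]: "peval (pmul a b) env = peval a env * peval b env"
proof -
  have "((\<lambda>r. r + x) ^^ n) 0 = x * n" for x n :: nat by (induction n) simp_all
  then show ?thesis by (simp add: pmul_def)
qed

lemma peval_ppred [simp]: "peval (ppred a) env = peval a env - 1"
  by (cases "peval a env") (simp_all add: ppred_def)

lemma peval_pdiff [simp]: "peval (pdiff a b) env = peval a env - peval b env"
proof -
  have "((\<lambda>r. r - 1) ^^ n) x = x - n" for x n :: nat by (induction n) simp_all
  then show ?thesis by (simp add: pdiff_def)
qed

definition psum :: "pexp \<Rightarrow> pexp \<Rightarrow> pexp" where
  "psum b e = PRec b PZero (padd (PVar 0) (lift e))"

definition pprod :: "pexp \<Rightarrow> pexp \<Rightarrow> pexp" where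
  "pprod b e = PRec b (pconst 1) (pmul (PVar 0) (lift e))"

lemma peval_psum [simp]: "peval (psum b e) env = (\<Sum>y<peval b env. peval e (y # env))"
proof -
  have "rec_nat 0 (\<lambda>j r. r + f j) n = (\<Sum>y<n. f y)" for f :: "nat \<Rightarrow> nat" and n
    by (induction n) simp_all
  then show ?thesis by (simp add: psum_def)
qed

lemma peval_pprod [simp]: "peval (pprod b e) env = (\<Prod>y<peval b env. peval e (y # env))"
proof -
  have "rec_nat 1 (\<lambda>j r. r * f j) n = (\<Prod>y<n. f y)" for f :: "nat \<Rightarrow> nat" and n
    by (induction n) simp_all
  then show ?thesis by (simp add: pprod_def)
qed

lemma wf_pexp_arith [simp]:
  "wf_pexp k (padd a b) \<longleftrightarrow> wf_pexp k a \<and> wf_pexp k b"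
  "wf_pexp k (pmul a b) \<longleftrightarrow> wf_pexp k a \<and> wf_pexp k b"
  "wf_pexp k (ppred a) \<longleftrightarrow> wf_pexp k a"
  "wf_pexp k (pdiff a b) \<longleftrightarrow> wf_pexp k a \<and> wf_pexp k b"
  "wf_pexp k (psum a e) \<longleftrightarrow> wf_pexp k a \<and> wf_pexp (Suc k) e"
  "wf_pexp k (pprod a e) \<longleftrightarrow> wf_pexp k a \<and> wf_pexp (Suc k) e"
  by (auto simp: padd_def pmul_def ppred_def pdiff_def psum_def pprod_def)

text \<open>Tests return 1 for true and 0 for false; the connectives and bounded quantifiers read
  every nonzero value as true.\<close>
definition pnot :: "pexp \<Rightarrow> pexp" where
  "pnot a = pdiff (pconst 1) a"

definition ple :: "pexp \<Rightarrow> pexp \<Rightarrow> pexp" where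
  "ple a b = pnot (pdiff a b)"

definition pless :: "pexp \<Rightarrow> pexp \<Rightarrow> pexp" where
  "pless a b = ple (PSuc a) b"

definition peq :: "pexp \<Rightarrow> pexp \<Rightarrow> pexp" where
  "peq a b = pmul (ple a b) (ple b a)"

definition pdisj :: "pexp \<Rightarrow> pexp \<Rightarrow> pexp" where
  "pdisj a b = pnot (pnot (padd a b))"

definition pconj :: "pexp \<Rightarrow> pexp \<Rightarrow> pexp" where
  "pconj a b = pnot (pnot (pmul a b))"

definition pex :: "pexp \<Rightarrow> pexp \<Rightarrow> pexp" where
  "pex b e = pnot (pnot (psum b e))"

definition pall :: "pexp \<Rightarrow> pexp \<Rightarrow> pexp" where
  "pall b e = pnot (pnot (pprod b e))"

lemma peval_pnot [simp]: "peval (pnot a) env = of_bool (peval a env = 0)"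
  by (simp add: pnot_def)

lemma peval_tests [simp]:
  "peval (ple a b) env = of_bool (peval a env \<le> peval b env)"
  "peval (pless a b) env = of_bool (peval a env < peval b env)"
  "peval (peq a b) env = of_bool (peval a env = peval b env)"
  "peval (pdisj a b) env = of_bool (peval a env \<noteq> 0 \<or> peval b env \<noteq> 0)"
  "peval (pconj a b) env = of_bool (peval a env \<noteq> 0 \<and> peval b env \<noteq> 0)"
  "peval (pex b e) env = of_bool (\<exists>y<peval b env. peval e (y # env) \<noteq> 0)"
  "peval (pall b e) env = of_bool (\<forall>y<peval b env. peval e (y # env) \<noteq> 0)"
  by (auto simp: ple_def pless_def peq_def pdisj_def pconj_def pex_def pall_def sum_eq_0_iff)

lemma wf_pexp_tests [simp]:
  "wf_pexp k (pnot a) \<longleftrightarrow> wf_pexp k a"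
  "wf_pexp k (ple a b) \<longleftrightarrow> wf_pexp k a \<and> wf_pexp k b"
  "wf_pexp k (pless a b) \<longleftrightarrow> wf_pexp k a \<and> wf_pexp k b"
  "wf_pexp k (peq a b) \<longleftrightarrow> wf_pexp k a \<and> wf_pexp k b"
  "wf_pexp k (pdisj a b) \<longleftrightarrow> wf_pexp k a \<and> wf_pexp k b"
  "wf_pexp k (pconj a b) \<longleftrightarrow> wf_pexp k a \<and> wf_pexp k b"
  "wf_pexp k (pex a e) \<longleftrightarrow> wf_pexp k a \<and> wf_pexp (Suc k) e"
  "wf_pexp k (pall a e) \<longleftrightarrow> wf_pexp k a \<and> wf_pexp (Suc k) e"
  by (auto simp: pnot_def ple_def pless_def peq_def pdisj_def pconj_def pex_def pall_def)

definition pthe :: "pexp \<Rightarrow> pexp \<Rightarrow> pexp" where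
  "pthe b e = psum b (pmul (PVar 0) e)"

lemma peval_pthe:
  assumes "\<And>y. peval e (y # env) = of_bool (P y)" and "\<And>y. P y \<longleftrightarrow> y = x" and "x < peval b env"
  shows "peval (pthe b e) env = x"
proof -
  have "{..<peval b env} \<inter> {y. P y} = {x}" using assms(2,3) by auto
  then show ?thesis by (simp add: pthe_def assms(1))
qed

lemma wf_pexp_pthe [simp]: "wf_pexp k (pthe b e) \<longleftrightarrow> wf_pexp k b \<and> wf_pexp (Suc k) e"
  by (simp add: pthe_def)

definition pdiv :: "pexp \<Rightarrow> pexp \<Rightarrow> pexp" where
  "pdiv a b = pmul (pnot (pnot b)) (psum a (ple (pmul (PSuc (PVar 0)) (lift b)) (lift a)))"

lemma lessThan_div_eq:
  fixes a b :: nat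
  assumes "b \<noteq> 0"
  shows "{..<a div b} = {..<a} \<inter> {z. Suc z * b \<le> a}"
proof -
  have "Suc z * b \<le> a \<longleftrightarrow> z < a div b" for z
    using assms less_eq_div_iff_mult_less_eq[of b "Suc z" a] Suc_le_eq by blast
  then show ?thesis by (auto simp del: mult_Suc intro: less_le_trans[OF _ div_le_dividend])
qed

lemma peval_pdiv [simp]: "peval (pdiv a b) env = peval a env div peval b env"
  using lessThan_div_eq[of "peval b env" "peval a env", symmetric]
  by (cases "peval b env = 0") (simp_all add: pdiv_def)

definition pmod :: "pexp \<Rightarrow> pexp \<Rightarrow> pexp" where
  "pmod a b = pdiff a (pmul b (pdiv a b))"

lemma peval_pmod [simp]: "peval (pmod a b) env = peval a env mod peval b env"
  by (simp add: pmod_def minus_mult_div_eq_mod)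

definition ppow :: "pexp \<Rightarrow> pexp \<Rightarrow> pexp" where
  "ppow a i = pprod i (lift a)"

lemma peval_ppow [simp]: "peval (ppow a i) env = peval a env ^ peval i env"
  by (simp add: ppow_def)

definition pdvd :: "pexp \<Rightarrow> pexp \<Rightarrow> pexp" where
  "pdvd a b = pnot (pmod b a)"

lemma peval_pdvd [simp]: "peval (pdvd a b) env = of_bool (peval a env dvd peval b env)"
  by (simp add: pdvd_def dvd_eq_mod_eq_0)

lemma coprime_iff_bounded:
  fixes a b :: nat
  shows "coprime a b \<longleftrightarrow> (\<forall>x<Suc (a + b). x dvd a \<and> x dvd b \<longrightarrow> x = 1)"
proof
  assume "\<forall>x<Suc (a + b). x dvd a \<and> x dvd b \<longrightarrow> x = 1"
  moreover have "gcd a b \<le> a + b"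
    by (cases "a = 0") (simp_all add: trans_le_add1)
  ultimately have "gcd a b = 1" by simp
  then show "coprime a b" by (simp add: coprime_iff_gcd_eq_1)
qed (use coprime_common_divisor_nat[of a b] in blast)

definition pcoprime :: "pexp \<Rightarrow> pexp \<Rightarrow> pexp" where
  "pcoprime a b = pall (PSuc (padd a b))
     (pdisj (pnot (pconj (pdvd (PVar 0) (lift a)) (pdvd (PVar 0) (lift b)))) (peq (PVar 0) (pconst 1)))"

lemma peval_pcoprime [simp]:
  "peval (pcoprime a b) env = of_bool (coprime (peval a env) (peval b env))"
  by (simp add: pcoprime_def coprime_iff_bounded[of "peval a env"]) blast

lemma sum_lessThan_Suc_triangle: "(\<Sum>i<Suc n. i) = triangle n"
  by (induction n) simp_all

definition ppair :: "pexp \<Rightarrow> pexp \<Rightarrow> pexp" where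
  "ppair a b = padd (psum (PSuc (padd a b)) (PVar 0)) a"

lemma peval_ppair [simp]: "peval (ppair a b) env = prod_encode (peval a env, peval b env)"
  by (simp add: ppair_def prod_encode_def sum_lessThan_Suc_triangle del: sum.lessThan_Suc)

lemma prod_encode_eq_iff: "prod_encode p = n \<longleftrightarrow> p = prod_decode n"
  by (metis prod_decode_inverse prod_encode_inverse)

lemma prod_decode_0 [simp]: "prod_decode 0 = (0, 0)"
  using prod_encode_inverse[of "(0, 0)"] by (simp add: prod_encode_def)

lemma prod_decode_le: "fst (prod_decode n) \<le> n" "snd (prod_decode n) \<le> n"
  by (metis le_prod_encode_1 prod.collapse prod_decode_inverse)
     (metis le_prod_encode_2 prod.collapse prod_decode_inverse)

definition pfst :: "pexp \<Rightarrow> pexp" where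
  "pfst a = pthe (PSuc a) (pex (PSuc (lift a)) (peq (ppair (PVar 1) (PVar 0)) (lift (lift a))))"

definition psnd :: "pexp \<Rightarrow> pexp" where
  "psnd a = pthe (PSuc a) (pex (PSuc (lift a)) (peq (ppair (PVar 0) (PVar 1)) (lift (lift a))))"

lemma peval_pfst [simp]: "peval (pfst a) env = fst (prod_decode (peval a env))"
  unfolding pfst_def
  by (rule peval_pthe[where P = "\<lambda>x. \<exists>y<Suc (peval a env). prod_encode (x, y) = peval a env"])
    (auto simp: prod_encode_eq_iff less_Suc_eq_le prod_decode_le prod_eq_iff)

lemma peval_psnd [simp]: "peval (psnd a) env = snd (prod_decode (peval a env))"
  unfolding psnd_def
  by (rule peval_pthe[where P = "\<lambda>y. \<exists>x<Suc (peval a env). prod_encode (x, y) = peval a env"])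
    (auto simp: prod_encode_eq_iff less_Suc_eq_le prod_decode_le prod_eq_iff)

definition pint_pos :: "pexp \<Rightarrow> pexp" where
  "pint_pos a = pmul (pnot (pmod a (pconst 2))) (pdiv a (pconst 2))"

definition pint_neg :: "pexp \<Rightarrow> pexp" where
  "pint_neg a = pmul (pmod a (pconst 2)) (PSuc (pdiv a (pconst 2)))"

lemma peval_pint_pos [simp]: "peval (pint_pos a) env = nat (int_decode (peval a env))"
proof (cases "even (peval a env)")
  case False
  then have "peval a env mod 2 = 1" by presburger
  then show ?thesis using False by (simp add: pint_pos_def int_decode_def sum_decode_def)
qed (simp add: pint_pos_def int_decode_def sum_decode_def)

lemma peval_pint_neg [simp]: "peval (pint_neg a) env = nat (- int_decode (peval a env))"
proof (cases "even (peval a env)")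
  case False
  then have "peval a env mod 2 = 1" by presburger
  then show ?thesis using False by (simp add: pint_neg_def int_decode_def sum_decode_def)
qed (simp add: pint_neg_def int_decode_def sum_decode_def)

definition ptl :: "pexp \<Rightarrow> pexp" where
  "ptl a = psnd (ppred a)"

lemma peval_ptl [simp]: "peval (ptl a) env = list_encode (tl (list_decode (peval a env)))"
proof -
  obtain xs where "peval a env = list_encode xs" by (metis list_decode_inverse)
  then show ?thesis by (cases xs) (simp_all add: ptl_def)
qed

definition pdrop :: "pexp \<Rightarrow> pexp \<Rightarrow> pexp" where
  "pdrop a i = piter i a (ptl (PVar 0))"

lemma peval_pdrop [simp]:
  "peval (pdrop a i) env = list_encode (drop (peval i env) (list_decode (peval a env)))"
proof -
  have "((\<lambda>r. list_encode (tl (list_decode r))) ^^ n) c = list_encode (drop n (list_decode c))" for n c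
    by (induction n) (simp_all add: drop_Suc tl_drop)
  then show ?thesis by (simp add: pdrop_def)
qed

definition pnth :: "pexp \<Rightarrow> pexp \<Rightarrow> pexp" where
  "pnth a i = pfst (ppred (pdrop a i))"

lemma peval_pnth [simp]: "peval (pnth a i) env = nth_default 0 (list_decode (peval a env)) (peval i env)"
proof -
  have "fst (prod_decode (list_encode (drop n xs) - 1)) = nth_default 0 xs n" for n xs
  proof (cases "n < length xs")
    case True
    then have "drop n xs = xs ! n # drop (Suc n) xs" by (rule Cons_nth_drop_Suc[symmetric])
    then show ?thesis using True by (simp add: nth_default_nth)
  next
    case False
    then show ?thesis by (simp add: nth_default_beyond)
  qed
  then show ?thesis by (simp add: pnth_def)
qed

lemma length_le_list_encode: "length xs \<le> list_encode xs"
  by (induction xs) (auto intro: le_trans[OF _ le_prod_encode_2])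

lemma list_encode_eq_0_iff: "list_encode xs = 0 \<longleftrightarrow> xs = []"
  by (cases xs) simp_all

definition plength :: "pexp \<Rightarrow> pexp" where
  "plength a = psum a (pnot (pnot (pdrop (lift a) (PVar 0))))"

lemma peval_plength [simp]: "peval (plength a) env = length (list_decode (peval a env))"
proof -
  let ?c = "peval a env"
  have "{..<?c} \<inter> {i. list_encode (drop i (list_decode ?c)) \<noteq> 0} = {..<length (list_decode ?c)}"
    using length_le_list_encode[of "list_decode ?c"] by (auto simp: list_encode_eq_0_iff)
  then show ?thesis by (simp add: plength_def)
qed

lemma wf_pexp_coding [simp]:
  "wf_pexp k (pdiv a b) \<longleftrightarrow> wf_pexp k a \<and> wf_pexp k b"
  "wf_pexp k (pmod a b) \<longleftrightarrow> wf_pexp k a \<and> wf_pexp k b"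
  "wf_pexp k (ppow a b) \<longleftrightarrow> wf_pexp k a \<and> wf_pexp k b"
  "wf_pexp k (pdvd a b) \<longleftrightarrow> wf_pexp k a \<and> wf_pexp k b"
  "wf_pexp k (pcoprime a b) \<longleftrightarrow> wf_pexp k a \<and> wf_pexp k b"
  "wf_pexp k (ppair a b) \<longleftrightarrow> wf_pexp k a \<and> wf_pexp k b"
  "wf_pexp k (pfst a) \<longleftrightarrow> wf_pexp k a"
  "wf_pexp k (psnd a) \<longleftrightarrow> wf_pexp k a"
  "wf_pexp k (pint_pos a) \<longleftrightarrow> wf_pexp k a"
  "wf_pexp k (pint_neg a) \<longleftrightarrow> wf_pexp k a"
  "wf_pexp k (ptl a) \<longleftrightarrow> wf_pexp k a"
  "wf_pexp k (pdrop a i) \<longleftrightarrow> wf_pexp k a \<and> wf_pexp k i"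
  "wf_pexp k (pnth a i) \<longleftrightarrow> wf_pexp k a \<and> wf_pexp k i"
  "wf_pexp k (plength a) \<longleftrightarrow> wf_pexp k a"
  by (auto simp: pdiv_def pmod_def ppow_def pdvd_def pcoprime_def ppair_def pfst_def psnd_def pint_pos_def
      pint_neg_def ptl_def pdrop_def pnth_def plength_def)

section \<open>Codes of rational numbers\<close>

definition rat_code_num :: "nat \<Rightarrow> int" where
  "rat_code_num c = int_decode (fst (prod_decode c))"

definition rat_code_den :: "nat \<Rightarrow> nat" where
  "rat_code_den c = snd (prod_decode c)"

definition canonical_rat_code :: "nat \<Rightarrow> bool" where
  "canonical_rat_code c \<longleftrightarrow> 0 < rat_code_den c \<and> coprime (nat \<bar>rat_code_num c\<bar>) (rat_code_den c)"

lemma rat_code_encode_rat [simp]: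
  "rat_code_num (encode_rat r) = fst (quotient_of r)"
  "rat_code_den (encode_rat r) = nat (snd (quotient_of r))"
  by (simp_all add: rat_code_num_def rat_code_den_def encode_rat_def)

lemma canonical_rat_code_iff: "canonical_rat_code c \<longleftrightarrow> c \<in> range encode_rat"
proof
  assume canonical: "canonical_rat_code c"
  let ?r = "Fract (rat_code_num c) (int (rat_code_den c))"
  have "quotient_of ?r = (rat_code_num c, int (rat_code_den c))"
    using canonical by (simp add: canonical_rat_code_def quotient_of_Fract)
  then have "encode_rat ?r = c"
    by (simp add: encode_rat_def rat_code_num_def rat_code_den_def)
  then show "c \<in> range encode_rat" by (metis rangeI)
next
  assume "c \<in> range encode_rat"
  then obtain r where "c = encode_rat r" by blast
  moreover have "coprime (fst (quotient_of r)) (snd (quotient_of r))"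
    by (simp add: quotient_of_coprime)
  ultimately show "canonical_rat_code c"
    using quotient_of_denom_pos'[of r] by (simp add: canonical_rat_code_def)
qed

lemma canonical_encode_rat [simp]: "canonical_rat_code (encode_rat r)"
  by (simp add: canonical_rat_code_iff)

lemma real_of_rat_quotient:
  "real_of_rat r = of_int (fst (quotient_of r)) / of_int (snd (quotient_of r))"
proof -
  obtain a b where quotient: "quotient_of r = (a, b)" by fastforce
  then have "r = of_int a / of_int b" by (rule quotient_of_div)
  then show ?thesis using quotient by (simp add: of_rat_divide)
qed

lemma rat_unit_interval_iff:
  "0 < r \<and> r < 1 \<longleftrightarrow> 0 < fst (quotient_of r) \<and> fst (quotient_of r) < snd (quotient_of r)"
proof -
  obtain a b where quotient: "quotient_of r = (a, b)" by fastforce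
  then have "r = of_int a / of_int b" "0 < b" by (auto intro: quotient_of_div quotient_of_denom_pos)
  then show ?thesis using quotient by (simp add: zero_less_divide_iff divide_less_eq_1)
qed

lemma scaled_rat_parts:
  assumes "nat (snd (quotient_of r)) dvd D"
  shows "real (nat (fst (quotient_of r)) * (D div nat (snd (quotient_of r))))
       - real (nat (- fst (quotient_of r)) * (D div nat (snd (quotient_of r)))) = real_of_rat r * real D"
proof -
  let ?z = "fst (quotient_of r)" and ?d = "snd (quotient_of r)"
  have "real (nat ?z) - real (nat (- ?z)) = of_int ?z"
    by (cases "0 \<le> ?z") simp_all
  moreover have "real (D div nat ?d) = real D / of_int ?d"
    using assms quotient_of_denom_pos'[of r] by (simp add: real_of_nat_div)
  ultimately have "(real (nat ?z) - real (nat (- ?z))) * real (D div nat ?d) = real_of_rat r * real D"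
    by (simp add: real_of_rat_quotient)
  then show ?thesis by (simp add: left_diff_distrib)
qed

lemma abs_scaled_rat:
  assumes "nat (snd (quotient_of r)) dvd D"
  shows "real (nat \<bar>fst (quotient_of r)\<bar> * (D div nat (snd (quotient_of r)))) = \<bar>real_of_rat r\<bar> * real D"
proof -
  let ?z = "fst (quotient_of r)" and ?d = "snd (quotient_of r)"
  have d: "0 < ?d" by (rule quotient_of_denom_pos')
  then have "real (D div nat ?d) = real D / of_int ?d"
    using assms by (simp add: real_of_nat_div)
  moreover have "\<bar>real_of_rat r\<bar> = of_int \<bar>?z\<bar> / of_int ?d"
    using d by (simp add: real_of_rat_quotient)
  ultimately show ?thesis by simp
qed

section \<open>Checking a certificate with natural numbers\<close>

lemma base_digit_less: "x < k ^ N \<Longrightarrow> i < N \<Longrightarrow> x div k ^ i mod k < (k::nat)"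
  by (cases "k = 0") (auto simp: zero_power)

lemma base_digits_exist:
  fixes k :: nat
  assumes "\<And>i. i < N \<Longrightarrow> v i < k"
  shows "\<exists>x<k ^ N. \<forall>i<N. x div k ^ i mod k = v i"
  using assms
proof (induction N arbitrary: v)
  case 0
  then show ?case by simp
next
  case (Suc N)
  obtain x where x: "x < k ^ N" "\<forall>i<N. x div k ^ i mod k = v (Suc i)"
    using Suc.IH[of "\<lambda>i. v (Suc i)"] Suc.prems by auto
  have v0: "v 0 < k" using Suc.prems by simp
  have "v 0 + k * x < k * Suc x" using v0 by simp
  also have "\<dots> \<le> k ^ Suc N" using x(1) by (simp only: power_Suc Suc_le_eq mult_le_mono2)
  finally have "v 0 + k * x < k ^ Suc N" .
  moreover have "(v 0 + k * x) div k ^ i mod k = v i" if "i < Suc N" for i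
  proof (cases i)
    case 0
    then show ?thesis using v0 by simp
  next
    case (Suc j)
    have "(v 0 + k * x) div k ^ i = (v 0 + k * x) div k div k ^ j"
      by (simp add: Suc div_mult2_eq)
    also have "\<dots> = x div k ^ j" using v0 by simp
    finally show ?thesis using x(2) Suc that by simp
  qed
  ultimately show ?case by blast
qed

lemma all_words_iff_all_numbers:
  assumes cong: "\<And>u v. (\<And>i. i < N \<Longrightarrow> u i = v i) \<Longrightarrow> P u \<longleftrightarrow> P v"
  shows "(\<forall>x<length xs ^ N. P (\<lambda>i. xs ! (x div length xs ^ i mod length xs)))
    \<longleftrightarrow> (\<forall>u. (\<forall>i<N. u i \<in> set xs) \<longrightarrow> P u)"
proof
  assume all_numbers: "\<forall>x<length xs ^ N. P (\<lambda>i. xs ! (x div length xs ^ i mod length xs))"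
  show "\<forall>u. (\<forall>i<N. u i \<in> set xs) \<longrightarrow> P u"
  proof (intro allI impI)
    fix u assume "\<forall>i<N. u i \<in> set xs"
    then have "\<forall>i. \<exists>j. i < N \<longrightarrow> j < length xs \<and> xs ! j = u i"
      by (simp add: in_set_conv_nth)
    then have "\<exists>v. \<forall>i. i < N \<longrightarrow> v i < length xs \<and> xs ! v i = u i" by (rule choice)
    then obtain v where v: "\<And>i. i < N \<Longrightarrow> v i < length xs \<and> xs ! v i = u i" by blast
    obtain x where x: "x < length xs ^ N" "\<forall>i<N. x div length xs ^ i mod length xs = v i"
      using base_digits_exist[of N v "length xs"] v by auto
    have "P (\<lambda>i. xs ! (x div length xs ^ i mod length xs)) \<longleftrightarrow> P u"
      by (rule cong) (simp add: x(2) v)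
    then show "P u" using all_numbers x(1) by simp
  qed
next
  assume all_words: "\<forall>u. (\<forall>i<N. u i \<in> set xs) \<longrightarrow> P u"
  show "\<forall>x<length xs ^ N. P (\<lambda>i. xs ! (x div length xs ^ i mod length xs))"
  proof (intro allI impI)
    fix x assume x: "x < length xs ^ N"
    show "P (\<lambda>i. xs ! (x div length xs ^ i mod length xs))"
      by (rule all_words[rule_format]) (use base_digit_less[OF x] in simp)
  qed
qed

lemma nat_gap_iff:
  fixes X Y c R :: nat
  shows "Y * c + R < X * c \<or> X * c + R < Y * c \<longleftrightarrow> real R < \<bar>real X - real Y\<bar> * real c"
proof -
  have "Y * c + R < X * c \<longleftrightarrow> real Y * real c + real R < real X * real c"
    and "X * c + R < Y * c \<longleftrightarrow> real X * real c + real R < real Y * real c"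
    by (simp_all flip: of_nat_add of_nat_mult)
  moreover have "\<bar>real X - real Y\<bar> * real c = \<bar>real X * real c - real Y * real c\<bar>"
    by (simp add: abs_mult_pos left_diff_distrib)
  ultimately show ?thesis by linarith
qed

lemma real_pow_mult_pow_diff:
  assumes "0 < q" and "i \<le> N"
  shows "real (p ^ i * q ^ (N - i)) = real q ^ N * (real p / real q) ^ i"
proof -
  have "real q ^ N = real q ^ i * real q ^ (N - i)" using assms(2) by (simp flip: power_add)
  then show ?thesis using assms(1) by (simp add: power_divide)
qed

text \<open>With lam = p / q, this is the inequality lam^N K < |t - (\<Sum>i<N. u i lam^i)| (1 - lam) D
  multiplied by q^(N+1) and rearranged so that all quantities are natural numbers: X - Y is
  D q^N (t - \<Sum>i<N. u i lam^i), split into the contributions of positive and negative numerators.\<close>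
definition word_refuted :: "nat \<Rightarrow> nat \<Rightarrow> nat \<Rightarrow> (nat \<Rightarrow> nat) \<Rightarrow> nat \<Rightarrow> nat \<Rightarrow> nat \<Rightarrow> bool" where
  "word_refuted p q t u N D K \<longleftrightarrow>
     (let pos = (\<lambda>c. nat (rat_code_num c) * (D div rat_code_den c));
          neg = (\<lambda>c. nat (- rat_code_num c) * (D div rat_code_den c));
          X = pos t * q ^ N + (\<Sum>i<N. neg (u i) * (p ^ i * q ^ (N - i)));
          Y = neg t * q ^ N + (\<Sum>i<N. pos (u i) * (p ^ i * q ^ (N - i)));
          R = p ^ N * K * q
      in Y * (q - p) + R < X * (q - p) \<or> X * (q - p) + R < Y * (q - p))"

lemma word_refuted_cong:
  assumes "\<And>i. i < N \<Longrightarrow> u i = v i"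
  shows "word_refuted p q t u N D K \<longleftrightarrow> word_refuted p q t v N D K"
proof -
  have "(\<Sum>i<N. nat (s * rat_code_num (u i)) * (D div rat_code_den (u i)) * (p ^ i * q ^ (N - i)))
      = (\<Sum>i<N. nat (s * rat_code_num (v i)) * (D div rat_code_den (v i)) * (p ^ i * q ^ (N - i)))" for s
    using assms by (intro sum.cong) simp_all
  from this[of 1] this[of "- 1"] show ?thesis by (simp add: word_refuted_def Let_def)
qed

lemma word_refuted_iff:
  fixes lam t :: rat and u :: "nat \<Rightarrow> rat"
  defines "p \<equiv> nat (fst (quotient_of lam))" and "q \<equiv> nat (snd (quotient_of lam))"
    and "l \<equiv> real_of_rat lam"
  assumes lam: "0 < lam" "lam < 1" and den_t: "nat (snd (quotient_of t)) dvd D"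
    and den_u: "\<And>i. i < N \<Longrightarrow> nat (snd (quotient_of (u i))) dvd D"
  shows "word_refuted p q (encode_rat t) (\<lambda>i. encode_rat (u i)) N D K \<longleftrightarrow>
    l ^ N * K < \<bar>real_of_rat t - (\<Sum>i<N. real_of_rat (u i) * l ^ i)\<bar> * (1 - l) * D"
proof -
  have pq: "0 < p" "p < q" using lam rat_unit_interval_iff[of lam] by (auto simp: p_def q_def)
  have l: "l = real p / real q"
    using pq by (simp add: l_def p_def q_def real_of_rat_quotient)
  let ?pos = "\<lambda>c. nat (rat_code_num c) * (D div rat_code_den c)"
  let ?neg = "\<lambda>c. nat (- rat_code_num c) * (D div rat_code_den c)"
  let ?X = "?pos (encode_rat t) * q ^ N + (\<Sum>i<N. ?neg (encode_rat (u i)) * (p ^ i * q ^ (N - i)))"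
  let ?Y = "?neg (encode_rat t) * q ^ N + (\<Sum>i<N. ?pos (encode_rat (u i)) * (p ^ i * q ^ (N - i)))"
  let ?S = "\<Sum>i<N. real_of_rat (u i) * l ^ i"
  have powers: "real (p ^ i * q ^ (N - i)) = real q ^ N * l ^ i" if "i < N" for i
    using real_pow_mult_pow_diff[of q i N p] pq that by (simp add: l)
  have t_part: "real (?pos (encode_rat t)) - real (?neg (encode_rat t)) = real_of_rat t * real D"
    using scaled_rat_parts[OF den_t] by simp
  have u_part: "(\<Sum>i<N. (real (?pos (encode_rat (u i))) - real (?neg (encode_rat (u i))))
        * real (p ^ i * q ^ (N - i)))
      = (\<Sum>i<N. real D * real q ^ N * (real_of_rat (u i) * l ^ i))"
    using scaled_rat_parts[OF den_u] powers by (intro sum.cong) simp_all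
  have "real ?X - real ?Y = (real (?pos (encode_rat t)) - real (?neg (encode_rat t))) * real q ^ N
      - (\<Sum>i<N. (real (?pos (encode_rat (u i))) - real (?neg (encode_rat (u i))))
        * real (p ^ i * q ^ (N - i)))"
    by (simp add: sum_subtractf left_diff_distrib algebra_simps)
  also have "\<dots> = real D * real q ^ N * (real_of_rat t - ?S)"
    unfolding t_part u_part by (simp add: sum_distrib_left right_diff_distrib)
  finally have X_Y: "real ?X - real ?Y = real D * real q ^ N * (real_of_rat t - ?S)" .
  have R: "real (p ^ N * K * q) = real q ^ Suc N * (l ^ N * K)"
    using pq by (simp add: l power_divide)
  have gap: "\<bar>real ?X - real ?Y\<bar> * real (q - p) = real q ^ Suc N * (\<bar>real_of_rat t - ?S\<bar> * (1 - l) * D)"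
  proof -
    have "\<bar>real ?X - real ?Y\<bar> = real D * real q ^ N * \<bar>real_of_rat t - ?S\<bar>"
      unfolding X_Y by (simp add: abs_mult)
    moreover have "real (q - p) = real q * (1 - l)" using pq by (simp add: l of_nat_diff field_simps)
    ultimately show ?thesis by (simp add: mult_ac)
  qed
  have "0 < real q ^ Suc N" using pq by simp
  then show ?thesis
    unfolding word_refuted_def Let_def nat_gap_iff R gap by (rule mult_less_cancel_left_pos)
qed

lemma all_numbers_word_refuted_iff:
  assumes "gtds_instance lam" and "nat (snd (quotient_of t)) dvd D"
    and "\<forall>a\<in>set ws. nat (snd (quotient_of a)) dvd D"
  shows "(\<forall>x<length ws ^ N. word_refuted (nat (fst (quotient_of lam))) (nat (snd (quotient_of lam)))
      (encode_rat t) (\<lambda>i. nth_default 0 (map encode_rat ws) (x div length ws ^ i mod length ws)) N D K)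
    \<longleftrightarrow> (\<forall>u. (\<forall>i<N. u i \<in> set ws) \<longrightarrow> real_of_rat lam ^ N * K
      < \<bar>real_of_rat t - (\<Sum>i<N. real_of_rat (u i) * real_of_rat lam ^ i)\<bar> * (1 - real_of_rat lam) * D)"
    (is "(\<forall>x<?k ^ N. word_refuted ?p ?q ?t _ N D K) \<longleftrightarrow> ?far_words")
proof -
  have "word_refuted ?p ?q ?t (\<lambda>i. nth_default 0 (map encode_rat ws) (x div ?k ^ i mod ?k)) N D K \<longleftrightarrow>
      word_refuted ?p ?q ?t (\<lambda>i. encode_rat (ws ! (x div ?k ^ i mod ?k))) N D K"
    if "x < ?k ^ N" for x
    by (rule word_refuted_cong) (simp add: nth_default_nth base_digit_less[OF that])
  then have "(\<forall>x<?k ^ N.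
        word_refuted ?p ?q ?t (\<lambda>i. nth_default 0 (map encode_rat ws) (x div ?k ^ i mod ?k)) N D K)
      \<longleftrightarrow> (\<forall>x<?k ^ N. word_refuted ?p ?q ?t (\<lambda>i. encode_rat (ws ! (x div ?k ^ i mod ?k))) N D K)"
    by blast
  also have "\<dots> \<longleftrightarrow> (\<forall>u. (\<forall>i<N. u i \<in> set ws) \<longrightarrow> word_refuted ?p ?q ?t (\<lambda>i. encode_rat (u i)) N D K)"
    by (rule all_words_iff_all_numbers) (rule word_refuted_cong, simp)
  also have "\<dots> \<longleftrightarrow> ?far_words"
    using assms word_refuted_iff[of lam t D N] by (simp add: gtds_instance_def)
  finally show ?thesis .
qed

definition refutation_check :: "nat \<Rightarrow> nat \<Rightarrow> bool" where
  "refutation_check m n \<longleftrightarrow>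
    (let lc = fst (prod_decode n); tc = fst (prod_decode (snd (prod_decode n)));
         wc = list_decode (snd (prod_decode (snd (prod_decode n))));
         k = length wc; w = nth_default 0 wc;
         p = nat (rat_code_num lc); q = rat_code_den lc;
         N = fst (prod_decode m); D = fst (prod_decode (snd (prod_decode m)));
         K = snd (prod_decode (snd (prod_decode m)))
     in canonical_rat_code lc \<and> canonical_rat_code tc \<and> 0 < p \<and> p < q \<and>
        0 < D \<and> rat_code_den tc dvd D \<and>
        (\<forall>j<k. canonical_rat_code (w j) \<and> rat_code_den (w j) dvd D \<and>
               nat \<bar>rat_code_num (w j)\<bar> * (D div rat_code_den (w j)) \<le> K) \<and>
        (\<forall>x<k ^ N. word_refuted p q tc (\<lambda>i. w (x div k ^ i mod k)) N D K))"

lemma refutation_check_encode_instance: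
  "refutation_check m (encode_instance lam t ws) \<longleftrightarrow> gtds_instance lam \<and>
     gtds_certificate lam t ws (fst (prod_decode m)) (fst (prod_decode (snd (prod_decode m))))
       (snd (prod_decode (snd (prod_decode m))))"
proof -
  define N D K where "N = fst (prod_decode m)" and "D = fst (prod_decode (snd (prod_decode m)))"
    and "K = snd (prod_decode (snd (prod_decode m)))"
  let ?k = "length ws" and ?p = "nat (fst (quotient_of lam))" and ?q = "nat (snd (quotient_of lam))"
  let ?w = "nth_default 0 (map encode_rat ws)"
  have unfolded: "refutation_check m (encode_instance lam t ws) \<longleftrightarrow> (0 < ?p \<and> ?p < ?q) \<and>
      0 < D \<and> nat (snd (quotient_of t)) dvd D \<and>
      (\<forall>j<?k. rat_code_den (?w j) dvd D \<and> nat \<bar>rat_code_num (?w j)\<bar> * (D div rat_code_den (?w j)) \<le> K) \<and>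
      (\<forall>x<?k ^ N. word_refuted ?p ?q (encode_rat t) (\<lambda>i. ?w (x div ?k ^ i mod ?k)) N D K)"
    by (simp add: refutation_check_def encode_instance_def N_def D_def K_def Let_def nth_default_nth)
  have unit_interval: "0 < ?p \<and> ?p < ?q \<longleftrightarrow> gtds_instance lam"
    using rat_unit_interval_iff[of lam] quotient_of_denom_pos'[of lam] by (auto simp: gtds_instance_def)
  have weights:
    "(\<forall>j<?k. rat_code_den (?w j) dvd D \<and> nat \<bar>rat_code_num (?w j)\<bar> * (D div rat_code_den (?w j)) \<le> K)
      \<longleftrightarrow> (\<forall>a\<in>set ws. nat (snd (quotient_of a)) dvd D \<and> \<bar>real_of_rat a\<bar> * D \<le> K)"
  proof -
    have "nat \<bar>fst (quotient_of a)\<bar> * (D div nat (snd (quotient_of a))) \<le> K \<longleftrightarrow> \<bar>real_of_rat a\<bar> * D \<le> K"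
      if "nat (snd (quotient_of a)) dvd D" for a
      using abs_scaled_rat[OF that] by (metis of_nat_le_iff)
    then show ?thesis by (auto simp: all_set_conv_all_nth nth_default_nth)
  qed
  show ?thesis
    unfolding unfolded unit_interval weights gtds_certificate_def
      N_def[symmetric] D_def[symmetric] K_def[symmetric]
    using all_numbers_word_refuted_iff[of lam t D ws N K] by auto
qed

lemma refutation_check_encoded:
  assumes "refutation_check m n"
  shows "\<exists>lam t ws. n = encode_instance lam t ws"
proof -
  let ?lc = "fst (prod_decode n)" and ?tc = "fst (prod_decode (snd (prod_decode n)))"
    and ?wc = "list_decode (snd (prod_decode (snd (prod_decode n))))"
  have "?lc \<in> range encode_rat" "?tc \<in> range encode_rat" "\<forall>c\<in>set ?wc. c \<in> range encode_rat"
    using assms by (auto simp: refutation_check_def Let_def all_set_conv_all_nth nth_default_nth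
        simp flip: canonical_rat_code_iff)
  moreover from this(3) have "\<exists>ws. ?wc = map encode_rat ws" unfolding ex_map_conv by blast
  ultimately obtain lam t ws where "?lc = encode_rat lam" "?tc = encode_rat t" "?wc = map encode_rat ws"
    by blast
  then have "encode_instance lam t ws = prod_encode (?lc, prod_encode (?tc, list_encode ?wc))"
    by (simp add: encode_instance_def)
  then show ?thesis by auto
qed

lemma ex_refutation_check_iff:
  "(\<exists>m. refutation_check m n) \<longleftrightarrow> (\<exists>lam t ws. n = encode_instance lam t ws \<and>
     gtds_instance lam \<and> (\<exists>N D K. gtds_certificate lam t ws N D K))" (is "_ \<longleftrightarrow> ?certified")
proof
  assume "\<exists>m. refutation_check m n"
  then show ?certified using refutation_check_encoded refutation_check_encode_instance by metis
next
  assume ?certified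
  then obtain lam t ws N D K where "n = encode_instance lam t ws" "gtds_instance lam"
    "gtds_certificate lam t ws N D K" by blast
  then have "refutation_check (prod_encode (N, prod_encode (D, K))) n"
    by (simp add: refutation_check_encode_instance)
  then show "\<exists>m. refutation_check m n" by blast
qed

section \<open>The check as a primitive recursive expression\<close>

definition prat_pos :: "pexp \<Rightarrow> pexp" where
  "prat_pos c = pint_pos (pfst c)"

definition prat_neg :: "pexp \<Rightarrow> pexp" where
  "prat_neg c = pint_neg (pfst c)"

definition pcanonical :: "pexp \<Rightarrow> pexp" where
  "pcanonical c = pconj (pless PZero (psnd c)) (pcoprime (padd (prat_pos c) (prat_neg c)) (psnd c))"

lemma nat_plus_nat_uminus: "nat z + nat (- z) = nat \<bar>z\<bar>"
  by simp

lemma peval_prat [simp]: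
  "peval (prat_pos c) env = nat (rat_code_num (peval c env))"
  "peval (prat_neg c) env = nat (- rat_code_num (peval c env))"
  "peval (pcanonical c) env = of_bool (canonical_rat_code (peval c env))"
  by (simp_all add: prat_pos_def prat_neg_def pcanonical_def rat_code_num_def rat_code_den_def
      canonical_rat_code_def nat_plus_nat_uminus)

lemma wf_pexp_prat [simp]:
  "wf_pexp k (prat_pos c) \<longleftrightarrow> wf_pexp k c"
  "wf_pexp k (prat_neg c) \<longleftrightarrow> wf_pexp k c"
  "wf_pexp k (pcanonical c) \<longleftrightarrow> wf_pexp k c"
  by (simp_all add: prat_pos_def prat_neg_def pcanonical_def)

definition pword_refuted :: "pexp \<Rightarrow> pexp \<Rightarrow> pexp \<Rightarrow> pexp \<Rightarrow> pexp \<Rightarrow> pexp \<Rightarrow> pexp \<Rightarrow> pexp" where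
  "pword_refuted p q t u N D K =
    (let pos = (\<lambda>D c. pmul (prat_pos c) (pdiv D (psnd c)));
         neg = (\<lambda>D c. pmul (prat_neg c) (pdiv D (psnd c)));
         weighted = (\<lambda>f. psum N (pmul (f (lift D) u)
           (pmul (ppow (lift p) (PVar 0)) (ppow (lift q) (pdiff (lift N) (PVar 0))))));
         X = padd (pmul (pos D t) (ppow q N)) (weighted neg);
         Y = padd (pmul (neg D t) (ppow q N)) (weighted pos);
         R = pmul (pmul (ppow p N) K) q;
         c = pdiff q p
     in pdisj (pless (padd (pmul Y c) R) (pmul X c)) (pless (padd (pmul X c) R) (pmul Y c)))"

lemma peval_pword_refuted [simp]:
  "peval (pword_refuted p q t u N D K) env = of_bool (word_refuted (peval p env) (peval q env)
     (peval t env) (\<lambda>i. peval u (i # env)) (peval N env) (peval D env) (peval K env))"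
  by (simp add: pword_refuted_def word_refuted_def Let_def rat_code_den_def)

lemma wf_pexp_pword_refuted [simp]:
  "wf_pexp k p \<Longrightarrow> wf_pexp k q \<Longrightarrow> wf_pexp k t \<Longrightarrow> wf_pexp (Suc k) u \<Longrightarrow> wf_pexp k N \<Longrightarrow>
    wf_pexp k D \<Longrightarrow> wf_pexp k K \<Longrightarrow> wf_pexp k (pword_refuted p q t u N D K)"
  by (simp add: pword_refuted_def Let_def)

definition pcheck :: pexp where
  "pcheck =
    (let n = PVar 1; m = PVar 0;
         lc = pfst n; tc = pfst (psnd n); W = psnd (psnd n); k = plength W;
         p = prat_pos lc; q = psnd lc;
         N = pfst m; D = pfst (psnd m); K = psnd (psnd m);
         w = pnth (lift W) (PVar 0);
         letter = pnth (lift (lift W))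
           (pmod (pdiv (PVar 1) (ppow (lift (lift k)) (PVar 0))) (lift (lift k)))
     in pnot (pconj (pconj (pconj (pcanonical lc) (pcanonical tc)) (pconj (pless PZero p) (pless p q)))
          (pconj (pconj (pless PZero D) (pdvd (psnd tc) D))
            (pconj
              (pall k (pconj (pconj (pcanonical w) (pdvd (psnd w) (lift D)))
                (ple (pmul (padd (prat_pos w) (prat_neg w)) (pdiv (lift D) (psnd w))) (lift K))))
              (pall (ppow k N)
                (pword_refuted (lift p) (lift q) (lift tc) letter (lift N) (lift D) (lift K)))))))"

lemma peval_pcheck: "peval pcheck [m, n] = of_bool (\<not> refutation_check m n)"
  by (simp add: pcheck_def refutation_check_def Let_def rat_code_den_def nat_plus_nat_uminus)

lemma wf_pcheck: "wf_pexp 2 pcheck"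
  by (simp add: pcheck_def Let_def numeral_2_eq_2)

theorem theorem21:
  shows "rec_enum {encode_instance lam t ws | lam t ws.
                     gtds_instance lam \<and> \<not> gtds_solvable lam t ws}"
proof (rule rec_enum_zero_projection[OF wf_pcheck])
  fix n
  have "(\<exists>m. peval pcheck [m, n] = 0) \<longleftrightarrow> (\<exists>lam t ws. n = encode_instance lam t ws \<and>
      gtds_instance lam \<and> (\<exists>N D K. gtds_certificate lam t ws N D K))"
    by (simp add: peval_pcheck ex_refutation_check_iff)
  then show "n \<in> {encode_instance lam t ws | lam t ws. gtds_instance lam \<and> \<not> gtds_solvable lam t ws}
      \<longleftrightarrow> (\<exists>m. peval pcheck [m, n] = 0)"
    using not_solvable_iff_certificate by blast
qed

end
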